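(* For every integer $m\ge2$, let $\rho_m=\sin^{-2}\frac{\pi}{2m}$. Then $\frac{\rho_m}{2}$ is an algebraic integer. *)

theory Defs
  imports Complex_Main "HOL-Computational_Algebra.Polynomial"
begin

end

theory Submission imports Defs begin

text \<open>
  Put \<open>\<theta> = \<pi>/m\<close> and \<open>x = 1 / (2 sin\<^sup>2 (\<theta>/2)) = 1 / (1 - cos \<theta>)\<close>, so that \<open>x cos \<theta> = x - 1\<close>
  and \<open>(x sin \<theta>)\<^sup>2 = 2x - 1\<close>. Expanding \<open>(x exp (i\<theta>))\<^sup>k = ((x - 1) + i x sin \<theta>)\<^sup>k\<close> shows that
  \<open>x\<^sup>k cos (k\<theta>)\<close> and \<open>x\<^sup>k sin (k\<theta>) / (x sin \<theta>)\<close> are the values at \<open>x\<close> of integer polynomials,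
  the first monic of degree \<open>k\<close> and the second of degree less than \<open>k\<close>. For \<open>m = 2k\<close> the
  identity \<open>cos (k\<theta>) = 0\<close>, and for \<open>m = 2k + 1\<close> the identity \<open>sin ((k+1)\<theta>) = sin (k\<theta>)\<close>,
  becomes a monic integer polynomial equation for \<open>x\<close>.
\<close>

fun cos_poly :: "nat \<Rightarrow> 'a::comm_ring_1 poly" and sin_poly :: "nat \<Rightarrow> 'a::comm_ring_1 poly" where
  "cos_poly 0 = 1"
| "cos_poly (Suc k) = [:-1, 1:] * cos_poly k - [:-1, 2:] * sin_poly k"
| "sin_poly 0 = 0"
| "sin_poly (Suc k) = [:-1, 1:] * sin_poly k + cos_poly k"

lemma coeff_cos_poly_sin_poly_Ints:
  "coeff (cos_poly k :: 'a::comm_ring_1 poly) i \<in> \<int>" "coeff (sin_poly k :: 'a poly) i \<in> \<int>"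
  by (induction k arbitrary: i)
    (auto simp: coeff_1 coeff_pCons split: nat.split intro!: Ints_add Ints_diff Ints_mult)

lemma coeff_cos_poly_sin_poly_high:
  "coeff (cos_poly k :: 'a::comm_ring_1 poly) k = 1"
  "k < i \<Longrightarrow> coeff (cos_poly k :: 'a poly) i = 0"
  "k \<le> i \<Longrightarrow> coeff (sin_poly k :: 'a poly) i = 0"
  by (induction k arbitrary: i) (auto simp: coeff_1 coeff_pCons split: nat.split)

lemma lead_coeff_eq_1I:
  fixes p :: "'a::comm_ring_1 poly"
  assumes "coeff p n = 1" and "\<And>i. n < i \<Longrightarrow> coeff p i = 0"
  shows "lead_coeff p = 1"
proof -
  have "degree p = n"
    using assms by (intro antisym degree_le le_degree) auto
  with assms(1) show ?thesis by simp
qed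

lemma lead_coeff_cos_poly: "lead_coeff (cos_poly k) = 1"
  by (intro lead_coeff_eq_1I[of _ k] coeff_cos_poly_sin_poly_high)

lemma lead_coeff_cos_poly_minus_sin_poly: "lead_coeff (cos_poly k - sin_poly k) = 1"
  by (intro lead_coeff_eq_1I[of _ k]) (simp_all add: coeff_cos_poly_sin_poly_high)

lemma poly_cos_poly_sin_poly:
  fixes x \<theta> :: real and k :: nat
  assumes "x * cos \<theta> = x - 1"
  shows "poly (cos_poly k) x = x ^ k * cos (k * \<theta>)"
    and "x * sin \<theta> * poly (sin_poly k) x = x ^ k * sin (k * \<theta>)"
proof (induction k)
  case 0
  show "poly (cos_poly 0) x = x ^ 0 * cos (real 0 * \<theta>)"
    and "x * sin \<theta> * poly (sin_poly 0) x = x ^ 0 * sin (real 0 * \<theta>)"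
    by simp_all
next
  case (Suc k)
  define v where "v = x * sin \<theta>"
  have v_sq: "v\<^sup>2 = 2 * x - 1"
  proof -
    have "v\<^sup>2 = x\<^sup>2 - (x * cos \<theta>)\<^sup>2"
      by (simp add: v_def power_mult_distrib sin_squared_eq algebra_simps)
    also have "\<dots> = x\<^sup>2 - (x - 1)\<^sup>2"
      using assms by simp
    finally show ?thesis
      by (simp add: power2_eq_square algebra_simps)
  qed
  have angle: "real (Suc k) * \<theta> = k * \<theta> + \<theta>"
    by (simp add: algebra_simps)
  have "x ^ Suc k * cos (Suc k * \<theta>)
      = x ^ k * cos (k * \<theta>) * (x * cos \<theta>) - v * (x ^ k * sin (k * \<theta>))"
    unfolding angle cos_add v_def by (simp add: algebra_simps)
  also have "\<dots> = (x - 1) * poly (cos_poly k) x - v\<^sup>2 * poly (sin_poly k) x"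
    unfolding assms Suc.IH(1) Suc.IH(2)[symmetric] by (simp add: v_def power2_eq_square)
  also have "\<dots> = poly (cos_poly (Suc k)) x"
    by (simp add: v_sq algebra_simps)
  finally show "poly (cos_poly (Suc k)) x = x ^ Suc k * cos (Suc k * \<theta>)" ..
  have "x ^ Suc k * sin (Suc k * \<theta>)
      = x ^ k * sin (k * \<theta>) * (x * cos \<theta>) + v * (x ^ k * cos (k * \<theta>))"
    unfolding angle sin_add v_def by (simp add: algebra_simps)
  also have "\<dots> = v * ((x - 1) * poly (sin_poly k) x + poly (cos_poly k) x)"
    unfolding assms Suc.IH(1) Suc.IH(2)[symmetric] by (simp add: v_def algebra_simps)
  also have "\<dots> = x * sin \<theta> * poly (sin_poly (Suc k)) x"
    by (simp add: v_def algebra_simps)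
  finally show "x * sin \<theta> * poly (sin_poly (Suc k)) x = x ^ Suc k * sin (Suc k * \<theta>)" ..
qed

lemma algebraic_int_if_cos_eq_0:
  fixes x \<theta> :: real and k :: nat
  assumes "x * cos \<theta> = x - 1" and "cos (k * \<theta>) = 0"
  shows "algebraic_int x"
proof
  show "lead_coeff (cos_poly k) = 1"
    by (rule lead_coeff_cos_poly)
  show "\<forall>i. coeff (cos_poly k) i \<in> \<int>"
    by (simp add: coeff_cos_poly_sin_poly_Ints)
  show "poly (cos_poly k) x = 0"
    using assms by (simp add: poly_cos_poly_sin_poly)
qed

lemma algebraic_int_if_sin_Suc_eq:
  fixes x \<theta> :: real and k :: nat
  assumes "x * cos \<theta> = x - 1" and "x * sin \<theta> \<noteq> 0" and "sin (Suc k * \<theta>) = sin (k * \<theta>)"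
  shows "algebraic_int x"
proof
  show "lead_coeff (cos_poly k - sin_poly k) = 1"
    by (rule lead_coeff_cos_poly_minus_sin_poly)
  show "\<forall>i. coeff (cos_poly k - sin_poly k) i \<in> \<int>"
    by (simp add: coeff_cos_poly_sin_poly_Ints Ints_diff)
  have "x * sin \<theta> * poly (sin_poly (Suc k)) x = x ^ Suc k * sin (Suc k * \<theta>)"
    using assms(1) by (rule poly_cos_poly_sin_poly)
  also have "\<dots> = x * (x ^ k * sin (k * \<theta>))"
    unfolding assms(3) by simp
  also have "\<dots> = x * sin \<theta> * (x * poly (sin_poly k) x)"
    unfolding poly_cos_poly_sin_poly(2)[OF assms(1), symmetric] by (simp add: algebra_simps)
  finally have "poly (sin_poly (Suc k)) x = x * poly (sin_poly k) x"
    using assms(2) by simp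
  then show "poly (cos_poly k - sin_poly k) x = 0"
    by (simp add: algebra_simps)
qed

theorem lemma4p1:
  fixes m :: nat
  assumes "m \<ge> 2"
  shows "algebraic_int ((1 / (sin (pi / (2 * real m)))\<^sup>2) / 2 :: real)"
proof -
  define \<theta> where "\<theta> = pi / m"
  define x where "x = 1 / (1 - cos \<theta>)"
  have "0 < \<theta>" "\<theta> < pi"
    using assms by (auto simp: \<theta>_def field_simps)
  then have "cos \<theta> < 1" "sin \<theta> > 0"
    by (auto intro: cos_monotone_0_pi[of 0 \<theta>, simplified] sin_gt_zero)
  then have "x > 0"
    by (simp add: x_def)
  have x_cos: "x * cos \<theta> = x - 1"
    using \<open>cos \<theta> < 1\<close> by (simp add: x_def field_simps)
  have "cos \<theta> = 1 - 2 * (sin (pi / (2 * real m)))\<^sup>2"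
    using cos_double_sin[of "pi / (2 * real m)"] by (simp add: \<theta>_def)
  then have x_eq: "(1 / (sin (pi / (2 * real m)))\<^sup>2) / 2 = x"
    by (simp add: x_def)
  show ?thesis
    unfolding x_eq
  proof (cases "even m")
    case True
    then obtain k where "m = 2 * k" by blast
    then have "cos (k * \<theta>) = 0"
      using assms by (simp add: \<theta>_def)
    with x_cos show "algebraic_int x"
      by (rule algebraic_int_if_cos_eq_0)
  next
    case False
    then obtain k where "m = 2 * k + 1" using oddE by blast
    then have "Suc k * \<theta> = pi - k * \<theta>"
      using assms by (simp add: \<theta>_def field_simps)
    then have "sin (Suc k * \<theta>) = sin (k * \<theta>)"
      by simp
    with x_cos show "algebraic_int x"
      using \<open>x > 0\<close> \<open>sin \<theta> > 0\<close> by (intro algebraic_int_if_sin_Suc_eq) auto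
  qed
qed

end
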